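(* A smooth surface $\Sigma\subset\mathbb R^3$ (without boundary) is saddle if and only if it has no caps, where a cap of $\Sigma$ is a topological disc $\Delta\subset\Sigma$ whose boundary $\partial\Delta$ lies in some plane $\Pi$ while $\Delta\setminus\partial\Delta$ lies strictly on one side of $\Pi$.
   Context: A smooth surface is a connected subset of $\mathbb R^3$ that is locally the graph of a smooth function in suitable coordinates. It is saddle if its Gaussian curvature (product of the principal curvatures) is $\le0$ at every point. *)

theory Defs
  imports "HOL-Analysis.Analysis"
begin

definition dir2 :: "bool \<Rightarrow> real \<times> real" where
  "dir2 b = (if b then (1, 0) else (0, 1))"

definition pd :: "bool \<Rightarrow> (real \<times> real \<Rightarrow> real) \<Rightarrow> real \<times> real \<Rightarrow> real" where
  "pd b f u = deriv (\<lambda>t. f (u + t *\<^sub>R dir2 b)) 0"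

fun ipd :: "bool list \<Rightarrow> (real \<times> real \<Rightarrow> real) \<Rightarrow> real \<times> real \<Rightarrow> real" where
  "ipd [] f = f"
| "ipd (b # bs) f = pd b (ipd bs f)"

definition smooth2_on :: "(real \<times> real) set \<Rightarrow> (real \<times> real \<Rightarrow> real) \<Rightarrow> bool" where
  "smooth2_on U f \<longleftrightarrow>
     (\<forall>bs. continuous_on U (ipd bs f) \<and>
        (\<forall>b. \<forall>u\<in>U. (\<lambda>t. ipd bs f (u + t *\<^sub>R dir2 b)) field_differentiable (at 0)))"

definition mk3 :: "real \<Rightarrow> real \<Rightarrow> real \<Rightarrow> real^3" where
  "mk3 x y z = (\<chi> i. if i = 1 then x else if i = 2 then y else z)"

definition graph_emb :: "(real^3 \<Rightarrow> real^3) \<Rightarrow> (real \<times> real \<Rightarrow> real) \<Rightarrow> real \<times> real \<Rightarrow> real^3" where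
  "graph_emb g f u = g (mk3 (fst u) (snd u) (f u))"

text \<open>S coincides, near the open set V, with the graph of a smooth f over the open set U,
  in coordinates given by the orthogonal transformation g (translations are absorbed into f, U).\<close>
definition local_graph ::
  "(real^3) set \<Rightarrow> (real^3 \<Rightarrow> real^3) \<Rightarrow> (real \<times> real) set \<Rightarrow> (real \<times> real \<Rightarrow> real) \<Rightarrow> (real^3) set \<Rightarrow> bool" where
  "local_graph S g U f V \<longleftrightarrow>
     orthogonal_transformation g \<and> open U \<and> smooth2_on U f \<and> open V \<and>
     S \<inter> V = graph_emb g f ` U"

definition smooth_surface :: "(real^3) set \<Rightarrow> bool" where
  "smooth_surface S \<longleftrightarrow> connected S \<and>
     (\<forall>p\<in>S. \<exists>g U f V. local_graph S g U f V \<and> p \<in> V)"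

definition gauss_curv :: "(real \<times> real \<Rightarrow> real) \<Rightarrow> real \<times> real \<Rightarrow> real" where
  "gauss_curv f u =
     (pd True (pd True f) u * pd False (pd False f) u - (pd False (pd True f) u)\<^sup>2) /
     (1 + (pd True f u)\<^sup>2 + (pd False f u)\<^sup>2)\<^sup>2"

definition saddle :: "(real^3) set \<Rightarrow> bool" where
  "saddle S \<longleftrightarrow>
     (\<forall>g U f V u. local_graph S g U f V \<and> u \<in> U \<and> graph_emb g f u \<in> V \<longrightarrow> gauss_curv f u \<le> 0)"

definition is_cap :: "(real^3) set \<Rightarrow> (real^3) set \<Rightarrow> bool" where
  "is_cap S D \<longleftrightarrow> D \<subseteq> S \<and>
     (\<exists>h k a c. homeomorphism (cball (0::real \<times> real) 1) D h k \<and> a \<noteq> 0 \<and>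
        h ` sphere 0 1 \<subseteq> {x. a \<bullet> x = c} \<and>
        D - h ` sphere 0 1 \<subseteq> {x. a \<bullet> x > c})"

end

(*
  Both directions compare the surface with planes, using a local graph z = f(x, y) and the
  second-order behaviour of f.

  If the Gaussian curvature is positive at a point, the Hessian of f is definite there, so near the
  point the signed height of the graph above its tangent plane is strictly concave with a strict
  maximum at the point. Cutting the graph by a parallel plane slightly on the other side of the
  tangent plane leaves a convex compact region whose graph is a cap.

  Conversely, let D be a cap with boundary in {a . x = c} and interior in {a . x > c}. For small
  e > 0 the function a . x + e |x|^2 attains its maximum over D at a point p away from the boundary
  circle. By invariance of domain, a neighbourhood of p in D is a neighbourhood of p in a local graph,
  so p is a local maximum there; the second-order test along every line through p makes the Hessian
  of f definite, i.e. the curvature at p is positive.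
*)

theory Submission
  imports Defs
begin

section \<open>One-variable calculus, binary forms and concavity\<close>

lemma local_max_imp_second_deriv_nonpos:
  fixes G G' :: "real \<Rightarrow> real"
  assumes e: "e > 0"
    and G: "\<And>t. \<bar>t\<bar> < e \<Longrightarrow> (G has_real_derivative G' t) (at t)"
    and G': "(G' has_real_derivative c) (at 0)"
    and max: "\<And>t. \<bar>t\<bar> < e \<Longrightarrow> G t \<le> G 0"
  shows "c \<le> 0"
proof (rule ccontr)
  assume "\<not> c \<le> 0"
  then obtain d where d: "d > 0" "\<And>h. h > 0 \<Longrightarrow> h < d \<Longrightarrow> G' 0 < G' (0 + h)"
    using DERIV_pos_inc_right[OF G'] by force
  have "G' 0 = 0"
    using DERIV_local_max[OF G[of 0] e] max e by (simp add: abs_minus_commute)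
  define h where "h = min d e / 2"
  have h: "0 < h" "h < d" "h < e" using d e by (auto simp: h_def)
  obtain z where z: "0 < z" "z < h" "G h - G 0 = (h - 0) * G' z"
    using MVT2[of 0 h G G'] h G by force
  have "G' z > 0" using d(2)[of z] z h \<open>G' 0 = 0\<close> by simp
  then have "G h > G 0" using z h by (simp add: algebra_simps)
  then show False using max[of h] h by simp
qed

lemma second_deriv_neg_imp_less:
  fixes H H' H'' :: "real \<Rightarrow> real"
  assumes H: "\<And>t. 0 \<le> t \<Longrightarrow> t \<le> 1 \<Longrightarrow> (H has_real_derivative H' t) (at t)"
    and H': "\<And>t. 0 \<le> t \<Longrightarrow> t \<le> 1 \<Longrightarrow> (H' has_real_derivative H'' t) (at t)"
    and H'': "\<And>t. 0 \<le> t \<Longrightarrow> t \<le> 1 \<Longrightarrow> H'' t < 0"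
    and H'0: "H' 0 = 0"
  shows "H 1 < H 0"
proof -
  obtain \<xi> where \<xi>: "0 < \<xi>" "\<xi> < 1" "H 1 - H 0 = (1 - 0) * H' \<xi>"
    using MVT2[of 0 1 H H'] H by force
  have "H' \<xi> < H' 0"
    by (rule DERIV_neg_imp_decreasing[OF \<xi>(1)]) (use \<xi> in \<open>auto intro!: exI H' H''\<close>)
  then show ?thesis using \<xi> H'0 by simp
qed

lemma binary_form_neg:
  fixes a m d v1 v2 :: real
  assumes a: "a < 0" and det: "a * d - m\<^sup>2 > 0" and v: "(v1, v2) \<noteq> (0, 0)"
  shows "a * v1\<^sup>2 + 2 * m * v1 * v2 + d * v2\<^sup>2 < 0"
proof -
  have "(a * v1 + m * v2)\<^sup>2 + (a * d - m\<^sup>2) * v2\<^sup>2 > 0"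
    using v a det by (cases "v2 = 0") (auto intro: add_nonneg_pos)
  moreover have "a * (a * v1\<^sup>2 + 2 * m * v1 * v2 + d * v2\<^sup>2) = (a * v1 + m * v2)\<^sup>2 + (a * d - m\<^sup>2) * v2\<^sup>2"
    by (simp add: power2_eq_square algebra_simps)
  ultimately have "0 < a * (a * v1\<^sup>2 + 2 * m * v1 * v2 + d * v2\<^sup>2)" by linarith
  then show ?thesis using a by (simp add: zero_less_mult_iff)
qed

lemma binary_form_definite_imp_det_pos:
  fixes a m d c :: real
  assumes def: "\<And>v1 v2. (v1, v2) \<noteq> (0, 0) \<Longrightarrow> c * (a * v1\<^sup>2 + 2 * m * v1 * v2 + d * v2\<^sup>2) < 0"
  shows "a * d - m\<^sup>2 > 0"
proof -
  have ca: "c * a < 0" using def[of 1 0] by simp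
  then have "a \<noteq> 0" by auto
  then have "c * (a * (- m)\<^sup>2 + 2 * m * (- m) * a + d * a\<^sup>2) < 0"
    using def[of "- m" a] by simp
  moreover have "c * (a * (- m)\<^sup>2 + 2 * m * (- m) * a + d * a\<^sup>2) = (c * a) * (a * d - m\<^sup>2)"
    by (simp add: power2_eq_square algebra_simps)
  ultimately have "(c * a) * (a * d - m\<^sup>2) < 0" by metis
  then show ?thesis using ca by (simp add: mult_less_0_iff)
qed

lemma continuous_on_open_imp_tendsto_nhds:
  fixes g :: "'a::t2_space \<Rightarrow> 'b::topological_space"
  assumes "open U" "continuous_on U g" "u \<in> U"
  shows "(g \<longlongrightarrow> g u) (nhds u)"
proof -
  have "isCont g u" using assms continuous_on_eq_continuous_at by blast
  then show ?thesis unfolding isCont_def tendsto_at_iff_tendsto_nhds .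
qed

lemma segment_in_convex:
  assumes "convex C" "x \<in> C" "y \<in> C" "0 \<le> t" "t \<le> 1"
  shows "x + t *\<^sub>R (y - x) \<in> C"
proof -
  have "(1 - t) *\<^sub>R x + t *\<^sub>R y \<in> C" by (rule convexD_alt[OF assms])
  then show ?thesis by (simp add: algebra_simps)
qed

lemma concave_on_if_segments:
  fixes W :: "'a::real_vector \<Rightarrow> real"
  assumes C: "convex C"
    and seg: "\<And>x y. x \<in> C \<Longrightarrow> y \<in> C \<Longrightarrow> concave_on {0..1} (\<lambda>t. W (x + t *\<^sub>R (y - x)))"
  shows "concave_on C W"
  unfolding concave_on_iff
proof (intro conjI C ballI allI impI)
  fix x y and a b :: real assume xy: "x \<in> C" "y \<in> C" and ab: "0 \<le> a" "0 \<le> b" "a + b = 1"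
  then have a: "a = 1 - b" by simp
  have "(1 - b) * W (x + 0 *\<^sub>R (y - x)) + b * W (x + 1 *\<^sub>R (y - x))
      \<le> W (x + ((1 - b) * 0 + b * 1) *\<^sub>R (y - x))"
    using concave_onD[OF seg[OF xy], of b 0 1] ab by simp
  moreover have "a *\<^sub>R x + b *\<^sub>R y = x + b *\<^sub>R (y - x)" by (simp add: a algebra_simps)
  ultimately show "a * W x + b * W y \<le> W (a *\<^sub>R x + b *\<^sub>R y)" by (simp add: a)
qed

lemma concave_on_strict_max_decreasing_on_rays:
  fixes W :: "'a::real_vector \<Rightarrow> real"
  assumes conc: "concave_on C W" and "u0 \<in> C" and max: "\<And>x. x \<in> C \<Longrightarrow> x \<noteq> u0 \<Longrightarrow> W x < W u0"
    and v: "v \<noteq> 0" and t: "0 \<le> t1" "t1 < t2" and in2: "u0 + t2 *\<^sub>R v \<in> C"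
  shows "W (u0 + t2 *\<^sub>R v) < W (u0 + t1 *\<^sub>R v)"
proof -
  define q where "q = t1 / t2"
  have q: "0 \<le> q" "q < 1" "q * t2 = t1" using t by (auto simp: q_def)
  have "(1 - q) *\<^sub>R u0 + q *\<^sub>R (u0 + t2 *\<^sub>R v) = u0 + (q * t2) *\<^sub>R v"
    by (simp add: algebra_simps)
  then have "(1 - q) * W u0 + q * W (u0 + t2 *\<^sub>R v) \<le> W (u0 + t1 *\<^sub>R v)"
    using concave_onD[OF conc, of q u0 "u0 + t2 *\<^sub>R v"] q in2 \<open>u0 \<in> C\<close> by simp
  moreover have "(1 - q) * W (u0 + t2 *\<^sub>R v) < (1 - q) * W u0"
    using max[OF in2] v t q by (intro mult_strict_left_mono) auto
  ultimately show ?thesis by (simp add: left_diff_distrib)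
qed

lemma convex_superlevel_concave_on:
  fixes W :: "'a::real_vector \<Rightarrow> real"
  assumes "concave_on C W"
  shows "convex {x \<in> C. a \<le> W x}"
proof (rule convexI)
  fix x y and s t :: real
  assume xy: "x \<in> {x \<in> C. a \<le> W x}" "y \<in> {x \<in> C. a \<le> W x}" and st: "0 \<le> s" "0 \<le> t" "s + t = 1"
  have "s * a + t * a \<le> s * W x + t * W y"
    using xy st by (intro add_mono mult_left_mono) auto
  also have "\<dots> \<le> W (s *\<^sub>R x + t *\<^sub>R y)"
    using assms xy st unfolding concave_on_iff by auto
  finally show "s *\<^sub>R x + t *\<^sub>R y \<in> {x \<in> C. a \<le> W x}"
    using convexD[OF concave_on_imp_convex[OF assms]] xy st by (simp flip: distrib_right)
qed

lemma concave_strict_max_superlevel_disc: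
  fixes W :: "'a::euclidean_space \<Rightarrow> real"
  assumes r: "r > 0" and cont: "continuous_on (cball u0 r) W" and conc: "concave_on (cball u0 r) W"
    and max: "\<And>x. x \<in> cball u0 r \<Longrightarrow> x \<noteq> u0 \<Longrightarrow> W x < W u0"
  obtains \<delta> \<Omega> where "\<delta> > 0" "\<Omega> \<subseteq> cball u0 r" "compact \<Omega>" "convex \<Omega>" "u0 \<in> interior \<Omega>"
    "\<And>x. x \<in> \<Omega> \<Longrightarrow> W u0 - \<delta> \<le> W x"
    "\<And>x. x \<in> \<Omega> \<Longrightarrow> x \<in> interior \<Omega> \<longleftrightarrow> W u0 - \<delta> < W x"
proof -
  have "sphere u0 r \<noteq> {}" using r by simp
  then obtain z0 where z0: "z0 \<in> sphere u0 r" "\<And>z. z \<in> sphere u0 r \<Longrightarrow> W z \<le> W z0"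
    using continuous_attains_sup[OF compact_sphere _ continuous_on_subset[OF cont sphere_cball]] by blast
  define \<delta> where "\<delta> = (W u0 - W z0) / 2"
  have "z0 \<noteq> u0" using z0(1) r by auto
  then have \<delta>: "\<delta> > 0" using max[of z0] z0(1) by (simp add: \<delta>_def)
  have sphere: "W z < W u0 - \<delta>" if "z \<in> sphere u0 r" for z
    using z0(2)[OF that] \<delta> by (simp add: \<delta>_def field_simps)
  define \<Omega> where "\<Omega> = cball u0 r \<inter> W -` {W u0 - \<delta>..}"
  have "closed \<Omega>"
    unfolding \<Omega>_def by (rule continuous_closed_preimage[OF cont closed_cball closed_atLeast])
  then have "compact \<Omega>" by (simp add: \<Omega>_def compact_eq_bounded_closed bounded_Int)
  moreover have "\<Omega> = {x \<in> cball u0 r. W u0 - \<delta> \<le> W x}" by (auto simp: \<Omega>_def)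
  then have "convex \<Omega>" using convex_superlevel_concave_on[OF conc] by simp
  moreover define \<Omega>' where "\<Omega>' = ball u0 r \<inter> W -` {W u0 - \<delta><..}"
  have "\<Omega>' \<subseteq> interior \<Omega>"
  proof (rule interior_maximal)
    show "\<Omega>' \<subseteq> \<Omega>" by (auto simp: \<Omega>'_def \<Omega>_def)
    show "open \<Omega>'" unfolding \<Omega>'_def
      by (rule continuous_open_preimage[OF continuous_on_subset[OF cont ball_subset_cball] open_ball open_greaterThan])
  qed
  moreover have "u0 \<in> \<Omega>'" using r \<delta> by (simp add: \<Omega>'_def)
  moreover have "x \<in> interior \<Omega> \<longleftrightarrow> W u0 - \<delta> < W x" if x: "x \<in> \<Omega>" for x
  proof
    assume "W u0 - \<delta> < W x"
    moreover from this have "x \<notin> sphere u0 r" using sphere by fastforce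
    ultimately have "x \<in> \<Omega>'" using x by (auto simp: \<Omega>'_def \<Omega>_def)
    then show "x \<in> interior \<Omega>" using \<open>\<Omega>' \<subseteq> interior \<Omega>\<close> by blast
  next
    assume "x \<in> interior \<Omega>"
    show "W u0 - \<delta> < W x"
    proof (cases "x = u0")
      case True then show ?thesis using \<delta> by simp
    next
      case False
      obtain e where e: "e > 0" "ball x e \<subseteq> \<Omega>" using \<open>x \<in> interior \<Omega>\<close> mem_interior by blast
      define v where "v = x - u0"
      have "norm v > 0" using False by (simp add: v_def)
      define t where "t = 1 + e / (2 * norm v)"
      have "1 < t" using e \<open>norm v > 0\<close> by (simp add: t_def)
      have "u0 + t *\<^sub>R v - x = (t - 1) *\<^sub>R v" by (simp add: v_def algebra_simps)
      then have "dist x (u0 + t *\<^sub>R v) = norm ((t - 1) *\<^sub>R v)" by (metis dist_norm dist_commute)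
      also have "\<dots> < e" using e \<open>norm v > 0\<close> \<open>1 < t\<close> by (simp add: t_def)
      finally have "u0 + t *\<^sub>R v \<in> \<Omega>" using e by auto
      moreover have "u0 \<in> cball u0 r" using r by simp
      ultimately have "W u0 - \<delta> \<le> W (u0 + t *\<^sub>R v)" and "W (u0 + t *\<^sub>R v) < W (u0 + 1 *\<^sub>R v)"
        using concave_on_strict_max_decreasing_on_rays[OF conc _ max, of v 1 t] \<open>norm v > 0\<close> \<open>1 < t\<close>
        by (auto simp: \<Omega>_def)
      then show ?thesis by (simp add: v_def)
    qed
  qed
  moreover have "\<Omega> \<subseteq> cball u0 r" "\<And>x. x \<in> \<Omega> \<Longrightarrow> W u0 - \<delta> \<le> W x" by (auto simp: \<Omega>_def)
  ultimately show ?thesis using that[of \<delta> \<Omega>] \<delta> by blast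
qed

section \<open>Topological discs\<close>

lemma homeomorphism_image_frontier:
  fixes S :: "'a::euclidean_space set" and T :: "'b::euclidean_space set"
  assumes hom: "homeomorphism S T f g" and "closed S" "closed T" and dim: "DIM('a) = DIM('b)"
  shows "f ` frontier S = frontier T"
proof -
  have f: "continuous_on S f" "inj_on f S" "f ` S = T" and g: "continuous_on T g" "inj_on g T" "g ` T = S"
    and gf: "\<And>x. x \<in> S \<Longrightarrow> g (f x) = x" and fg: "\<And>y. y \<in> T \<Longrightarrow> f (g y) = y"
    using hom by (auto simp: homeomorphism_def inj_on_def) metis+
  have fi: "f x \<in> interior T" if "x \<in> interior S" for x
    using continuous_image_subset_interior[OF f(1,2)] dim f(3) that by auto
  have gi: "g y \<in> interior S" if "y \<in> interior T" for y
    using continuous_image_subset_interior[OF g(1,2)] dim g(3) that by auto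
  have "f ` (S - interior S) = T - interior T"
  proof
    show "f ` (S - interior S) \<subseteq> T - interior T"
      using f(3) gf gi by fastforce
    show "T - interior T \<subseteq> f ` (S - interior S)"
    proof
      fix y assume y: "y \<in> T - interior T"
      then have "g y \<in> S - interior S" using g(3) fg fi by (metis DiffE DiffI image_eqI)
      then show "y \<in> f ` (S - interior S)" using fg y by (metis DiffD1 image_eqI)
    qed
  qed
  then show ?thesis using assms by (simp add: frontier_def closure_closed)
qed

lemma convex_compact_disc_boundary:
  fixes \<Omega> :: "'a::euclidean_space set"
  assumes "convex \<Omega>" "compact \<Omega>" "interior \<Omega> \<noteq> {}"
  obtains h k where "homeomorphism (cball (0::'a) 1) \<Omega> h k" "h ` sphere 0 1 = \<Omega> - interior \<Omega>"
proof -
  obtain h k where hk: "homeomorphism (cball (0::'a) 1) \<Omega> h k"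
    using homeomorphic_convex_compact_cball[OF assms, of 1 0]
    by (auto simp: homeomorphic_def dest: homeomorphism_symD)
  have "closed \<Omega>" using assms(2) by (rule compact_imp_closed)
  have "h ` frontier (cball 0 1) = frontier \<Omega>"
    by (rule homeomorphism_image_frontier[OF hk closed_cball \<open>closed \<Omega>\<close>]) simp
  then have "h ` sphere 0 1 = frontier \<Omega>" by (simp only: frontier_cball)
  then have "h ` sphere 0 1 = \<Omega> - interior \<Omega>"
    by (simp add: frontier_def closure_closed[OF \<open>closed \<Omega>\<close>])
  with hk show ?thesis by (rule that)
qed

lemma cap_interior_maximum:
  fixes h :: "'a::euclidean_space \<Rightarrow> 'b::real_inner"
  assumes hom: "homeomorphism (cball 0 1) D h k"
    and bd: "h ` sphere 0 1 \<subseteq> {x. a \<bullet> x = c}" and above: "D - h ` sphere 0 1 \<subseteq> {x. a \<bullet> x > c}"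
  obtains \<epsilon> z0 where "\<epsilon> > 0" "z0 \<in> ball 0 1"
    "\<And>x. x \<in> D \<Longrightarrow> a \<bullet> x + \<epsilon> * (norm x)\<^sup>2 \<le> a \<bullet> h z0 + \<epsilon> * (norm (h z0))\<^sup>2"
proof -
  have hD: "h ` cball 0 1 = D" and ch: "continuous_on (cball 0 1) h"
    and kh: "\<And>z. z \<in> cball 0 1 \<Longrightarrow> k (h z) = z"
    using hom by (auto simp: homeomorphism_def)
  have "compact D" using compact_continuous_image[OF ch compact_cball] hD by simp
  then obtain R where R: "R > 0" "\<And>x. x \<in> D \<Longrightarrow> norm x \<le> R"
    using compact_imp_bounded bounded_pos by metis
  have "h 0 \<in> D" using hD by force
  moreover have "h 0 \<notin> h ` sphere 0 1"
  proof
    assume "h 0 \<in> h ` sphere 0 1"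
    then obtain z where z: "z \<in> sphere 0 1" "h 0 = h z" by blast
    then have "k (h 0) = k (h z)" by simp
    then have "0 = z" using kh[of 0] kh[of z] z(1) by simp
    then show False using z(1) by simp
  qed
  ultimately have "a \<bullet> h 0 > c" using above by blast
  txt \<open>With \<open>\<epsilon> * R\<^sup>2 < a \<bullet> h 0 - c\<close> no point of the boundary circle can beat \<open>h 0\<close>.\<close>
  define \<epsilon> where "\<epsilon> = (a \<bullet> h 0 - c) / (2 * (R\<^sup>2 + 1))"
  have \<epsilon>: "\<epsilon> > 0" using \<open>a \<bullet> h 0 > c\<close> by (simp add: \<epsilon>_def add_nonneg_pos)
  have "\<epsilon> * R\<^sup>2 < a \<bullet> h 0 - c"
  proof -
    have "\<epsilon> * R\<^sup>2 \<le> \<epsilon> * (R\<^sup>2 + 1)" using \<epsilon> by simp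
    also have "\<dots> = (a \<bullet> h 0 - c) / 2"
      using add_nonneg_pos[of "R\<^sup>2" 1] by (simp add: \<epsilon>_def field_simps)
    finally show ?thesis using \<open>a \<bullet> h 0 > c\<close> by simp
  qed
  define \<phi> where "\<phi> x = a \<bullet> x + \<epsilon> * (norm x)\<^sup>2" for x
  have "continuous_on D \<phi>" unfolding \<phi>_def by (intro continuous_intros)
  then obtain p where p: "p \<in> D" "\<And>x. x \<in> D \<Longrightarrow> \<phi> x \<le> \<phi> p"
    using continuous_attains_sup[OF \<open>compact D\<close>] \<open>h 0 \<in> D\<close> by blast
  have "p \<notin> h ` sphere 0 1"
  proof
    assume "p \<in> h ` sphere 0 1"
    then have "\<phi> p \<le> c + \<epsilon> * R\<^sup>2"
      using bd R(2)[OF p(1)] \<epsilon> by (auto simp: \<phi>_def power_mono)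
    also have "\<dots> < \<phi> (h 0)"
    proof -
      have "0 \<le> \<epsilon> * (norm (h 0))\<^sup>2" using \<epsilon> by simp
      then show ?thesis using \<open>\<epsilon> * R\<^sup>2 < a \<bullet> h 0 - c\<close> unfolding \<phi>_def by linarith
    qed
    finally show False using p(2)[OF \<open>h 0 \<in> D\<close>] by simp
  qed
  moreover obtain z0 where "z0 \<in> cball 0 1" "h z0 = p" using p(1) hD by blast
  ultimately have "z0 \<in> ball 0 1" by (auto simp: less_le)
  with \<epsilon> p \<open>h z0 = p\<close> show ?thesis using that unfolding \<phi>_def by blast
qed

section \<open>Partial derivatives in the plane\<close>

lemma dir2_simps [simp]: "dir2 True = (1, 0)" "dir2 False = (0, 1)"
  by (simp_all add: dir2_def)

lemma ipd_append: "ipd (bs @ cs) f = ipd bs (ipd cs f)"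
  by (induction bs) auto

lemma smooth2_on_pd: "smooth2_on U f \<Longrightarrow> smooth2_on U (pd b f)"
  unfolding smooth2_on_def by (metis ipd_append ipd.simps)

text \<open>Since \<^const>\<open>pd\<close> is defined through \<^const>\<open>deriv\<close>, the last conjunct is what makes the
  partial derivatives genuine derivatives.\<close>
definition C1_on :: "(real \<times> real) set \<Rightarrow> (real \<times> real \<Rightarrow> real) \<Rightarrow> bool" where
  "C1_on U F \<longleftrightarrow> continuous_on U F \<and> (\<forall>b. continuous_on U (pd b F)) \<and>
     (\<forall>b. \<forall>u\<in>U. (\<lambda>t. F (u + t *\<^sub>R dir2 b)) field_differentiable (at 0))"

lemma smooth2_on_imp_C1_on: "smooth2_on U f \<Longrightarrow> C1_on U f"
  unfolding smooth2_on_def C1_on_def by (metis ipd.simps)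

lemma smooth2_on_imp_C1_on_pd: "smooth2_on U f \<Longrightarrow> C1_on U (pd b f)"
  by (intro smooth2_on_imp_C1_on smooth2_on_pd)

lemma C1_on_has_real_derivative_pd:
  assumes "C1_on U F" "u \<in> U"
  shows "((\<lambda>t. F (u + t *\<^sub>R dir2 b)) has_real_derivative pd b F u) (at 0)"
  using assms unfolding C1_on_def pd_def by (simp add: DERIV_deriv_iff_field_differentiable)

lemma has_real_derivative_pd_fst:
  assumes "C1_on U F" "(x, y) \<in> U"
  shows "((\<lambda>s. F (s, y)) has_real_derivative pd True F (x, y)) (at x)"
proof -
  have "((\<lambda>t. F (t + x, y)) has_real_derivative pd True F (x, y)) (at 0)"
    using C1_on_has_real_derivative_pd[OF assms, of True] by (simp add: add.commute)
  then show ?thesis using DERIV_shift[where f="\<lambda>s. F (s, y)" and x=0 and z=x] by simp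
qed

lemma has_real_derivative_pd_snd:
  assumes "C1_on U F" "(x, y) \<in> U"
  shows "((\<lambda>s. F (x, s)) has_real_derivative pd False F (x, y)) (at y)"
proof -
  have "((\<lambda>t. F (x, t + y)) has_real_derivative pd False F (x, y)) (at 0)"
    using C1_on_has_real_derivative_pd[OF assms, of False] by (simp add: add.commute)
  then show ?thesis using DERIV_shift[where f="\<lambda>s. F (x, s)" and x=0 and z=y] by simp
qed

lemma Icc_times_Icc_subset_ball:
  fixes x y h d :: real
  assumes "2 * h < d"
  shows "{x..x + h} \<times> {y..y + h} \<subseteq> ball (x, y) d"
proof clarify
  fix a b assume "a \<in> {x..x + h}" "b \<in> {y..y + h}"
  then have "dist (x, y) (a, b) \<le> 2 * h"
    using sqrt_sum_squares_le_sum_abs[of "a - x" "b - y"]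
    by (auto simp: dist_Pair_Pair dist_real_def dist_commute)
  then show "(a, b) \<in> ball (x, y) d" using assms by simp
qed

lemma C1_on_has_derivative:
  assumes U: "open U" and C: "C1_on U F" and u: "u \<in> U"
  shows "(F has_derivative (\<lambda>h. fst h * pd True F u + snd h * pd False F u)) (at u)"
proof -
  obtain x y where uxy: "u = (x, y)" by fastforce
  obtain e where e: "e > 0" "ball u e \<subseteq> U" using U u open_contains_ball by blast
  define X where "X = ball x (e/2)"
  define Y where "Y = ball y (e/2)"
  have XY: "X \<times> Y \<subseteq> U"
  proof clarify
    fix a b assume "a \<in> X" "b \<in> Y"
    then have "dist u (a, b) < e"
      using sqrt_sum_squares_le_sum_abs[of "x - a" "y - b"]
      by (auto simp: X_def Y_def uxy dist_Pair_Pair dist_real_def)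
    then show "(a, b) \<in> U" using e by auto
  qed
  have fx: "((\<lambda>x. F (x, y)) has_derivative (*) (pd True F (x, y))) (at x within X)"
    using has_real_derivative_pd_fst[OF C, of x y] u uxy
    by (simp add: has_field_derivative_def has_derivative_at_withinI)
  have fy: "((\<lambda>y. F (a, y)) has_derivative blinfun_mult_right (pd False F (a, b))) (at b within Y)"
    if "a \<in> X" "b \<in> Y" for a b
    using has_real_derivative_pd_snd[OF C, of a b] XY that
    by (auto simp: has_field_derivative_def intro: has_derivative_at_withinI)
  have "continuous (at (x, y)) (pd False F)"
    using C u uxy U unfolding C1_on_def by (metis continuous_on_eq_continuous_at)
  then have fc: "continuous (at (x, y) within X \<times> Y) (\<lambda>(a, b). blinfun_mult_right (pd False F (a, b)))"
    by (simp add: case_prod_beta' continuous_at_imp_continuous_within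
        bounded_linear.continuous[OF bounded_linear_blinfun_mult_right])
  have "((\<lambda>(a, b). F (a, b)) has_derivative
      (\<lambda>(s, t). pd True F (x, y) * s + blinfun_mult_right (pd False F (x, y)) t)) (at (x, y) within X \<times> Y)"
    by (rule has_derivative_partialsI[where f="\<lambda>a b. F (a, b)", OF fx fy fc]) (use e in \<open>auto simp: Y_def\<close>)
  moreover have "at (x, y) within X \<times> Y = at (x, y)"
    using e by (intro at_within_open) (auto simp: X_def Y_def open_Times)
  ultimately have "(F has_derivative (\<lambda>(s, t). pd True F (x, y) * s + pd False F (x, y) * t)) (at (x, y))"
    by simp
  then show ?thesis using uxy by (simp add: case_prod_beta' mult.commute)
qed

definition dir_deriv :: "(real \<times> real \<Rightarrow> real) \<Rightarrow> real \<times> real \<Rightarrow> real \<times> real \<Rightarrow> real" where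
  "dir_deriv F p v = fst v * pd True F p + snd v * pd False F p"

definition hess_form :: "(real \<times> real \<Rightarrow> real) \<Rightarrow> real \<times> real \<Rightarrow> real \<times> real \<Rightarrow> real" where
  "hess_form f p v = fst v * dir_deriv (pd True f) p v + snd v * dir_deriv (pd False f) p v"

definition hess_det :: "(real \<times> real \<Rightarrow> real) \<Rightarrow> real \<times> real \<Rightarrow> real" where
  "hess_det f p = pd True (pd True f) p * pd False (pd False f) p - (pd False (pd True f) p)\<^sup>2"

lemma hess_form_zero [simp]: "hess_form f p 0 = 0"
  by (simp add: hess_form_def dir_deriv_def)

lemma C1_on_has_real_derivative_line:
  assumes "open U" "C1_on U F" "x + t *\<^sub>R v \<in> U"
  shows "((\<lambda>s. F (x + s *\<^sub>R v)) has_real_derivative dir_deriv F (x + t *\<^sub>R v) v) (at t)"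
proof -
  have "((\<lambda>s. x + s *\<^sub>R v) has_derivative (\<lambda>h. h *\<^sub>R v)) (at t)"
    by (auto intro!: derivative_eq_intros)
  from has_derivative_compose[OF this C1_on_has_derivative[OF assms]]
  show ?thesis unfolding has_field_derivative_def dir_deriv_def
    by (rule has_derivative_eq_rhs) (auto simp: algebra_simps)
qed

lemma dir_deriv_has_real_derivative_line:
  assumes "open U" "smooth2_on U f" "x + t *\<^sub>R v \<in> U"
  shows "((\<lambda>s. dir_deriv f (x + s *\<^sub>R v) v) has_real_derivative hess_form f (x + t *\<^sub>R v) v) (at t)"
  unfolding dir_deriv_def[of f] hess_form_def
  by (intro DERIV_add DERIV_cmult C1_on_has_real_derivative_line[OF assms(1) smooth2_on_imp_C1_on_pd[OF assms(2)] assms(3)])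

lemma mixed_difference_eq_pd_fst_snd:
  assumes C: "C1_on U f" "C1_on U (pd True f)" and h: "h > 0"
    and box: "{x..x + h} \<times> {y..y + h} \<subseteq> U"
  obtains \<xi> \<eta> where "\<xi> \<in> {x..x + h}" "\<eta> \<in> {y..y + h}"
    "f (x + h, y + h) - f (x + h, y) - f (x, y + h) + f (x, y) = h * h * pd False (pd True f) (\<xi>, \<eta>)"
proof -
  have "((\<lambda>s. f (s, y + h) - f (s, y)) has_real_derivative pd True f (s, y + h) - pd True f (s, y)) (at s)"
    if "x \<le> s" "s \<le> x + h" for s
    using box that h by (intro DERIV_diff has_real_derivative_pd_fst[OF C(1)]) auto
  from MVT2[of x "x + h", OF _ this] h obtain \<xi> where \<xi>: "x < \<xi>" "\<xi> < x + h"
    "f (x + h, y + h) - f (x + h, y) - (f (x, y + h) - f (x, y)) =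
      h * (pd True f (\<xi>, y + h) - pd True f (\<xi>, y))" by auto
  have "((\<lambda>t. pd True f (\<xi>, t)) has_real_derivative pd False (pd True f) (\<xi>, t)) (at t)"
    if "y \<le> t" "t \<le> y + h" for t
    using box that \<xi> by (intro has_real_derivative_pd_snd[OF C(2)]) auto
  from MVT2[of y "y + h", OF _ this] h obtain \<eta> where \<eta>: "y < \<eta>" "\<eta> < y + h"
    "pd True f (\<xi>, y + h) - pd True f (\<xi>, y) = h * pd False (pd True f) (\<xi>, \<eta>)" by auto
  show ?thesis by (rule that[of \<xi> \<eta>]) (use \<xi> \<eta> in auto)
qed

lemma mixed_difference_eq_pd_snd_fst:
  assumes C: "C1_on U f" "C1_on U (pd False f)" and h: "h > 0"
    and box: "{x..x + h} \<times> {y..y + h} \<subseteq> U"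
  obtains \<xi> \<eta> where "\<xi> \<in> {x..x + h}" "\<eta> \<in> {y..y + h}"
    "f (x + h, y + h) - f (x + h, y) - f (x, y + h) + f (x, y) = h * h * pd True (pd False f) (\<xi>, \<eta>)"
proof -
  have "((\<lambda>t. f (x + h, t) - f (x, t)) has_real_derivative pd False f (x + h, t) - pd False f (x, t)) (at t)"
    if "y \<le> t" "t \<le> y + h" for t
    using box that h by (intro DERIV_diff has_real_derivative_pd_snd[OF C(1)]) auto
  from MVT2[of y "y + h", OF _ this] h obtain \<eta> where \<eta>: "y < \<eta>" "\<eta> < y + h"
    "f (x + h, y + h) - f (x, y + h) - (f (x + h, y) - f (x, y)) =
      h * (pd False f (x + h, \<eta>) - pd False f (x, \<eta>))" by auto
  have "((\<lambda>s. pd False f (s, \<eta>)) has_real_derivative pd True (pd False f) (s, \<eta>)) (at s)"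
    if "x \<le> s" "s \<le> x + h" for s
    using box that \<eta> by (intro has_real_derivative_pd_fst[OF C(2)]) auto
  from MVT2[of x "x + h", OF _ this] h obtain \<xi> where \<xi>: "x < \<xi>" "\<xi> < x + h"
    "pd False f (x + h, \<eta>) - pd False f (x, \<eta>) = h * pd True (pd False f) (\<xi>, \<eta>)" by auto
  show ?thesis by (rule that[of \<xi> \<eta>]) (use \<xi> \<eta> in \<open>auto simp: algebra_simps\<close>)
qed

lemma pd_commute:
  assumes U: "open U" and f: "smooth2_on U f" and u: "u \<in> U"
  shows "pd False (pd True f) u = pd True (pd False f) u"
proof -
  define B where "B = pd False (pd True f)"
  define C where "C = pd True (pd False f)"
  have C1: "C1_on U f" "C1_on U (pd True f)" "C1_on U (pd False f)"
    using f by (auto intro: smooth2_on_imp_C1_on smooth2_on_imp_C1_on_pd)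
  have cont: "continuous_on U B" "continuous_on U C"
    using C1 unfolding C1_on_def B_def C_def by blast+
  have close: "\<bar>B u - C u\<bar> < \<epsilon>" if "\<epsilon> > 0" for \<epsilon>
  proof -
    have "(B \<longlongrightarrow> B u) (nhds u)" "(C \<longlongrightarrow> C u) (nhds u)"
      using cont U u by (auto intro: continuous_on_open_imp_tendsto_nhds)
    then have "\<forall>\<^sub>F p in nhds u. p \<in> U \<and> dist (B p) (B u) < \<epsilon>/2 \<and> dist (C p) (C u) < \<epsilon>/2"
      using U u \<open>\<epsilon> > 0\<close> by (intro eventually_conj eventually_nhds_in_open tendstoD) auto
    then obtain d where "d > 0"
      and d: "\<And>p. dist p u < d \<Longrightarrow> p \<in> U \<and> dist (B p) (B u) < \<epsilon>/2 \<and> dist (C p) (C u) < \<epsilon>/2"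
      unfolding eventually_nhds_metric by blast
    then have d: "d > 0" "ball u d \<subseteq> U"
      "\<And>p. p \<in> ball u d \<Longrightarrow> dist (B p) (B u) < \<epsilon>/2 \<and> dist (C p) (C u) < \<epsilon>/2"
      by (auto simp: dist_commute)
    obtain x y where uxy: "u = (x, y)" by fastforce
    define h where "h = d / 4"
    have h: "h > 0" and box: "{x..x + h} \<times> {y..y + h} \<subseteq> ball u d"
      using d(1) Icc_times_Icc_subset_ball[of h d x y] by (auto simp: h_def uxy)
    obtain \<xi> \<eta> where \<xi>\<eta>: "(\<xi>, \<eta>) \<in> ball u d"
      "f (x + h, y + h) - f (x + h, y) - f (x, y + h) + f (x, y) = h * h * B (\<xi>, \<eta>)"
      using mixed_difference_eq_pd_fst_snd[OF C1(1,2) h] box d(2) unfolding B_def by blast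
    obtain \<xi>' \<eta>' where \<xi>\<eta>': "(\<xi>', \<eta>') \<in> ball u d"
      "f (x + h, y + h) - f (x + h, y) - f (x, y + h) + f (x, y) = h * h * C (\<xi>', \<eta>')"
      using mixed_difference_eq_pd_snd_fst[OF C1(1,3) h] box d(2) unfolding C_def by blast
    have "B (\<xi>, \<eta>) = C (\<xi>', \<eta>')" using \<xi>\<eta>(2) \<xi>\<eta>'(2) h by simp
    then show ?thesis using d(3)[OF \<xi>\<eta>(1)] d(3)[OF \<xi>\<eta>'(1)] unfolding dist_real_def by arith
  qed
  have "B u = C u" using close[of "\<bar>B u - C u\<bar>"] by force
  then show ?thesis by (simp add: B_def C_def)
qed

lemma hess_form_eq:
  assumes "open U" "smooth2_on U f" "p \<in> U"
  shows "hess_form f p v = pd True (pd True f) p * (fst v)\<^sup>2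
    + 2 * pd False (pd True f) p * fst v * snd v + pd False (pd False f) p * (snd v)\<^sup>2"
  using pd_commute[OF assms] unfolding hess_form_def dir_deriv_def
  by (simp add: power2_eq_square algebra_simps)

lemma continuous_on_hess_det:
  assumes "smooth2_on U f"
  shows "continuous_on U (hess_det f)"
  using smooth2_on_imp_C1_on_pd[OF assms, of True] smooth2_on_imp_C1_on_pd[OF assms, of False]
  unfolding hess_det_def C1_on_def by (intro continuous_intros) auto

section \<open>Local extrema and the tangent plane\<close>

text \<open>The factor \<open>b3 + 2 * \<epsilon> * f u0\<close> is the derivative of the objective with respect to the
  height; every other second-order term is a positive multiple of \<open>\<epsilon>\<close>.\<close>
lemma hess_form_sign_at_local_max:
  assumes U: "open U" and f: "smooth2_on U f" and r: "r > 0" "ball u0 r \<subseteq> U" and \<epsilon>: "\<epsilon> > 0"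
    and max: "\<And>u. u \<in> ball u0 r \<Longrightarrow>
       b1 * fst u + b2 * snd u + b3 * f u + \<epsilon> * ((fst u)\<^sup>2 + (snd u)\<^sup>2 + (f u)\<^sup>2)
       \<le> b1 * fst u0 + b2 * snd u0 + b3 * f u0 + \<epsilon> * ((fst u0)\<^sup>2 + (snd u0)\<^sup>2 + (f u0)\<^sup>2)"
    and v: "v \<noteq> 0"
  shows "(b3 + 2 * \<epsilon> * f u0) * hess_form f u0 v < 0"
proof -
  define e where "e = r / (norm v + 1)"
  have "norm v + 1 > 0" by (simp add: add_nonneg_pos)
  then have e: "e > 0" using r by (simp add: e_def)
  have ball: "u0 + t *\<^sub>R v \<in> ball u0 r" if "\<bar>t\<bar> < e" for t
  proof -
    have "\<bar>t\<bar> * norm v \<le> e * norm v" using that by (simp add: mult_right_mono)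
    also have "\<dots> < e * (norm v + 1)" using e by simp
    also have "\<dots> = r" using \<open>norm v + 1 > 0\<close> by (simp add: e_def)
    finally show ?thesis by (simp add: dist_norm)
  qed
  then have inU: "u0 + t *\<^sub>R v \<in> U" if "\<bar>t\<bar> < e" for t using that r by blast
  define F where "F t = f (u0 + t *\<^sub>R v)" for t
  define L where "L t = dir_deriv f (u0 + t *\<^sub>R v) v" for t
  have F: "(F has_real_derivative L t) (at t)" if "\<bar>t\<bar> < e" for t
    unfolding F_def L_def by (rule C1_on_has_real_derivative_line[OF U smooth2_on_imp_C1_on[OF f] inU[OF that]])
  have L: "(L has_real_derivative hess_form f u0 v) (at 0)"
    unfolding L_def using dir_deriv_has_real_derivative_line[OF U f inU, of 0] e by simp
  define G where "G t = b1 * (fst u0 + t * fst v) + b2 * (snd u0 + t * snd v) + b3 * F t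
    + \<epsilon> * ((fst u0 + t * fst v)\<^sup>2 + (snd u0 + t * snd v)\<^sup>2 + (F t)\<^sup>2)" for t
  define G' where "G' t = b1 * fst v + b2 * snd v + b3 * L t
    + \<epsilon> * (2 * (fst u0 + t * fst v) * fst v + 2 * (snd u0 + t * snd v) * snd v + 2 * F t * L t)" for t
  have "(b3 + 2 * \<epsilon> * F 0) * hess_form f u0 v + 2 * \<epsilon> * ((fst v)\<^sup>2 + (snd v)\<^sup>2 + (L 0)\<^sup>2) \<le> 0"
  proof (rule local_max_imp_second_deriv_nonpos[OF e])
    show "(G has_real_derivative G' t) (at t)" if "\<bar>t\<bar> < e" for t
      unfolding G_def G'_def using that by (auto intro!: derivative_eq_intros F simp: algebra_simps)
    show "(G' has_real_derivative (b3 + 2 * \<epsilon> * F 0) * hess_form f u0 v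
        + 2 * \<epsilon> * ((fst v)\<^sup>2 + (snd v)\<^sup>2 + (L 0)\<^sup>2)) (at 0)"
      unfolding G'_def using e by (auto intro!: derivative_eq_intros F L simp: algebra_simps power2_eq_square)
    show "G t \<le> G 0" if "\<bar>t\<bar> < e" for t
      using max[OF ball[OF that]] by (simp add: G_def F_def)
  qed
  moreover have "(fst v)\<^sup>2 + (snd v)\<^sup>2 > 0"
    using v by (cases v) (auto simp: sum_power2_gt_zero_iff zero_prod_def)
  then have "2 * \<epsilon> * ((fst v)\<^sup>2 + (snd v)\<^sup>2 + (L 0)\<^sup>2) > 0"
    using \<epsilon> by (simp add: add_pos_nonneg)
  ultimately show ?thesis by (simp add: F_def)
qed

lemma hess_det_pos_at_local_max:
  assumes U: "open U" and f: "smooth2_on U f" and r: "r > 0" "ball u0 r \<subseteq> U" and \<epsilon>: "\<epsilon> > 0"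
    and max: "\<And>u. u \<in> ball u0 r \<Longrightarrow>
       b1 * fst u + b2 * snd u + b3 * f u + \<epsilon> * ((fst u)\<^sup>2 + (snd u)\<^sup>2 + (f u)\<^sup>2)
       \<le> b1 * fst u0 + b2 * snd u0 + b3 * f u0 + \<epsilon> * ((fst u0)\<^sup>2 + (snd u0)\<^sup>2 + (f u0)\<^sup>2)"
  shows "hess_det f u0 > 0"
proof -
  have "u0 \<in> U" using r by auto
  show ?thesis unfolding hess_det_def
  proof (rule binary_form_definite_imp_det_pos[where c = "b3 + 2 * \<epsilon> * f u0"])
    fix v1 v2 :: real assume "(v1, v2) \<noteq> (0, 0)"
    then have "(v1, v2) \<noteq> 0" by (simp add: zero_prod_def)
    from hess_form_sign_at_local_max[OF assms this]
    show "(b3 + 2 * \<epsilon> * f u0) * (pd True (pd True f) u0 * v1\<^sup>2 + 2 * pd False (pd True f) u0 * v1 * v2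
        + pd False (pd False f) u0 * v2\<^sup>2) < 0"
      by (simp add: hess_form_eq[OF U f \<open>u0 \<in> U\<close>])
  qed
qed

lemma hess_form_definite_near:
  assumes U: "open U" and f: "smooth2_on U f" and u0: "u0 \<in> U" and K: "hess_det f u0 > 0"
  obtains s r where "s = 1 \<or> s = -1" "r > 0" "cball u0 r \<subseteq> U"
    "\<And>x v. x \<in> cball u0 r \<Longrightarrow> v \<noteq> 0 \<Longrightarrow> s * hess_form f x v < 0"
proof -
  define A where "A = pd True (pd True f)"
  define s :: real where "s = (if A u0 < 0 then 1 else -1)"
  have "A u0 \<noteq> 0" using K by (auto simp: hess_det_def A_def)
  then have "s * A u0 < 0" by (auto simp: s_def)
  moreover have "continuous_on U A"
    using smooth2_on_imp_C1_on_pd[OF f, of True] by (simp add: C1_on_def A_def)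
  ultimately have neg: "\<forall>\<^sub>F x in nhds u0. s * A x < 0"
    using order_tendstoD(2)[OF tendsto_mult_left[OF continuous_on_open_imp_tendsto_nhds[OF U _ u0]]]
    by blast
  have pos: "\<forall>\<^sub>F x in nhds u0. hess_det f x > 0"
    using order_tendstoD(1)[OF continuous_on_open_imp_tendsto_nhds[OF U continuous_on_hess_det[OF f] u0] K] .
  have "\<forall>\<^sub>F x in nhds u0. x \<in> U \<and> s * A x < 0 \<and> hess_det f x > 0"
    using eventually_conj[OF eventually_nhds_in_open[OF U u0] eventually_conj[OF neg pos]] .
  then obtain d where "d > 0" and d: "\<And>x. dist x u0 < d \<Longrightarrow> x \<in> U \<and> s * A x < 0 \<and> hess_det f x > 0"
    unfolding eventually_nhds_metric by blast
  show ?thesis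
  proof (rule that[of s "d / 2"])
    show "s = 1 \<or> s = -1" "d / 2 > 0" using \<open>d > 0\<close> by (auto simp: s_def)
    show "cball u0 (d / 2) \<subseteq> U" using d \<open>d > 0\<close> by (auto simp: dist_commute)
    fix x v :: "real \<times> real" assume "x \<in> cball u0 (d / 2)" and v: "v \<noteq> 0"
    then have "x \<in> U" "s * A x < 0" "hess_det f x > 0" using d[of x] \<open>d > 0\<close> by (auto simp: dist_commute)
    have "(s * A x) * (s * pd False (pd False f) x) - (s * pd False (pd True f) x)\<^sup>2 = (s * s) * hess_det f x"
      by (simp add: hess_det_def A_def power2_eq_square algebra_simps)
    also have "s * s = 1" by (simp add: s_def)
    finally have "(s * A x) * (s * pd False (pd False f) x) - (s * pd False (pd True f) x)\<^sup>2 = hess_det f x"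
      by simp
    then have "(s * A x) * (fst v)\<^sup>2 + 2 * (s * pd False (pd True f) x) * fst v * snd v
        + (s * pd False (pd False f) x) * (snd v)\<^sup>2 < 0"
      using binary_form_neg[OF \<open>s * A x < 0\<close>, of "s * pd False (pd False f) x"] \<open>hess_det f x > 0\<close> v
      by (cases v) (auto simp: zero_prod_def)
    then show "s * hess_form f x v < 0"
      by (simp add: hess_form_eq[OF U f \<open>x \<in> U\<close>] A_def algebra_simps)
  qed
qed

definition tangent_gap :: "(real \<times> real \<Rightarrow> real) \<Rightarrow> real \<times> real \<Rightarrow> real \<times> real \<Rightarrow> real" where
  "tangent_gap f u0 u = f u - f u0 - dir_deriv f u0 (u - u0)"

lemma tangent_gap_self [simp]: "tangent_gap f u0 u0 = 0"
  by (simp add: tangent_gap_def dir_deriv_def)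

lemma continuous_on_tangent_gap:
  "continuous_on U f \<Longrightarrow> continuous_on U (tangent_gap f u0)"
  unfolding tangent_gap_def dir_deriv_def by (intro continuous_intros)

lemma tangent_gap_has_real_derivative_line:
  assumes "open U" "smooth2_on U f" "x + t *\<^sub>R v \<in> U"
  shows "((\<lambda>t. s * tangent_gap f u0 (x + t *\<^sub>R v)) has_real_derivative
           s * (dir_deriv f (x + t *\<^sub>R v) v - dir_deriv f u0 v)) (at t)"
    and "((\<lambda>t. s * (dir_deriv f (x + t *\<^sub>R v) v - dir_deriv f u0 v)) has_real_derivative
           s * hess_form f (x + t *\<^sub>R v) v) (at t)"
proof -
  have "tangent_gap f u0 (x + t *\<^sub>R v) = f (x + t *\<^sub>R v) - f u0 - dir_deriv f u0 (x - u0) - t * dir_deriv f u0 v"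
    for t
    by (simp add: tangent_gap_def dir_deriv_def algebra_simps)
  then show "((\<lambda>t. s * tangent_gap f u0 (x + t *\<^sub>R v)) has_real_derivative
           s * (dir_deriv f (x + t *\<^sub>R v) v - dir_deriv f u0 v)) (at t)"
    by (auto intro!: derivative_eq_intros
        C1_on_has_real_derivative_line[OF assms(1) smooth2_on_imp_C1_on[OF assms(2)] assms(3)])
  show "((\<lambda>t. s * (dir_deriv f (x + t *\<^sub>R v) v - dir_deriv f u0 v)) has_real_derivative
           s * hess_form f (x + t *\<^sub>R v) v) (at t)"
    by (auto intro!: derivative_eq_intros dir_deriv_has_real_derivative_line[OF assms])
qed

lemma tangent_gap_concave_on:
  assumes U: "open U" and f: "smooth2_on U f" and C: "convex C" "C \<subseteq> U"
    and nonpos: "\<And>x v. x \<in> C \<Longrightarrow> s * hess_form f x v \<le> 0"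
  shows "concave_on C (\<lambda>u. s * tangent_gap f u0 u)"
proof (rule concave_on_if_segments[OF C(1)])
  fix x y assume xy: "x \<in> C" "y \<in> C"
  show "concave_on {0..1} (\<lambda>t. s * tangent_gap f u0 (x + t *\<^sub>R (y - x)))"
  proof (rule f''_le0_imp_concave)
    fix t :: real assume "t \<in> {0..1}"
    then have t: "x + t *\<^sub>R (y - x) \<in> C" using segment_in_convex[OF C(1) xy] by auto
    then show "s * hess_form f (x + t *\<^sub>R (y - x)) (y - x) \<le> 0" by (rule nonpos)
    from t C(2) show "((\<lambda>t. s * tangent_gap f u0 (x + t *\<^sub>R (y - x))) has_real_derivative
        s * (dir_deriv f (x + t *\<^sub>R (y - x)) (y - x) - dir_deriv f u0 (y - x))) (at t)"
      and "((\<lambda>t. s * (dir_deriv f (x + t *\<^sub>R (y - x)) (y - x) - dir_deriv f u0 (y - x)))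
        has_real_derivative s * hess_form f (x + t *\<^sub>R (y - x)) (y - x)) (at t)"
      by (auto intro: tangent_gap_has_real_derivative_line[OF U f])
  qed simp
qed

lemma tangent_gap_neg:
  assumes U: "open U" and f: "smooth2_on U f" and C: "convex C" "C \<subseteq> U" "u0 \<in> C"
    and neg: "\<And>x v. x \<in> C \<Longrightarrow> v \<noteq> 0 \<Longrightarrow> s * hess_form f x v < 0"
    and u: "u \<in> C" "u \<noteq> u0"
  shows "s * tangent_gap f u0 u < 0"
proof -
  have "s * tangent_gap f u0 (u0 + 1 *\<^sub>R (u - u0)) < s * tangent_gap f u0 (u0 + 0 *\<^sub>R (u - u0))"
  proof (rule second_deriv_neg_imp_less)
    fix t :: real assume "0 \<le> t" "t \<le> 1"
    then have t: "u0 + t *\<^sub>R (u - u0) \<in> C" using segment_in_convex[OF C(1,3) u(1)] by blast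
    then show "s * hess_form f (u0 + t *\<^sub>R (u - u0)) (u - u0) < 0" using neg u(2) by simp
    from t C(2) show "((\<lambda>t. s * tangent_gap f u0 (u0 + t *\<^sub>R (u - u0))) has_real_derivative
        s * (dir_deriv f (u0 + t *\<^sub>R (u - u0)) (u - u0) - dir_deriv f u0 (u - u0))) (at t)"
      and "((\<lambda>t. s * (dir_deriv f (u0 + t *\<^sub>R (u - u0)) (u - u0) - dir_deriv f u0 (u - u0)))
        has_real_derivative s * hess_form f (u0 + t *\<^sub>R (u - u0)) (u - u0)) (at t)"
      by (auto intro: tangent_gap_has_real_derivative_line[OF U f])
  qed simp
  then show ?thesis by simp
qed

lemma tangent_gap_superlevel_disc:
  assumes U: "open U" and f: "smooth2_on U f" and u0: "u0 \<in> U" and K: "hess_det f u0 > 0"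
  obtains s \<delta> \<Omega> where "s = 1 \<or> s = -1" "\<delta> > 0" "\<Omega> \<subseteq> U" "compact \<Omega>" "convex \<Omega>" "interior \<Omega> \<noteq> {}"
    "\<And>u. u \<in> \<Omega> \<Longrightarrow> - \<delta> \<le> s * tangent_gap f u0 u"
    "\<And>u. u \<in> \<Omega> \<Longrightarrow> u \<in> interior \<Omega> \<longleftrightarrow> - \<delta> < s * tangent_gap f u0 u"
proof -
  obtain s r where s: "s = 1 \<or> s = -1" and r: "r > 0" "cball u0 r \<subseteq> U"
    and neg: "\<And>x v. x \<in> cball u0 r \<Longrightarrow> v \<noteq> 0 \<Longrightarrow> s * hess_form f x v < 0"
    using hess_form_definite_near[OF U f u0 K] by blast
  have "continuous_on U f" using smooth2_on_imp_C1_on[OF f] by (simp add: C1_on_def)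
  then have cont: "continuous_on (cball u0 r) (\<lambda>u. s * tangent_gap f u0 u)"
    by (intro continuous_on_mult_left continuous_on_subset[OF continuous_on_tangent_gap r(2)])
  have "s * hess_form f x v \<le> 0" if "x \<in> cball u0 r" for x v
    using neg[OF that, of v] by (cases "v = 0") auto
  then have conc: "concave_on (cball u0 r) (\<lambda>u. s * tangent_gap f u0 u)"
    by (rule tangent_gap_concave_on[OF U f convex_cball r(2)])
  have smax: "s * tangent_gap f u0 u < s * tangent_gap f u0 u0" if "u \<in> cball u0 r" "u \<noteq> u0" for u
    using tangent_gap_neg[OF U f convex_cball r(2) _ neg that] r(1) by simp
  from concave_strict_max_superlevel_disc[OF r(1) cont conc smax]
  obtain \<delta> \<Omega> where \<delta>: "\<delta> > 0" and \<Omega>: "\<Omega> \<subseteq> cball u0 r" "compact \<Omega>" "convex \<Omega>" "u0 \<in> interior \<Omega>"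
    and lo: "\<And>u. u \<in> \<Omega> \<Longrightarrow> s * tangent_gap f u0 u0 - \<delta> \<le> s * tangent_gap f u0 u"
    and ic: "\<And>u. u \<in> \<Omega> \<Longrightarrow> u \<in> interior \<Omega> \<longleftrightarrow> s * tangent_gap f u0 u0 - \<delta> < s * tangent_gap f u0 u"
    by blast
  show ?thesis
  proof (rule that[of s \<delta> \<Omega>])
    show "\<Omega> \<subseteq> U" using \<Omega>(1) r(2) by blast
    show "interior \<Omega> \<noteq> {}" using \<Omega>(4) by blast
    show "- \<delta> \<le> s * tangent_gap f u0 u" if "u \<in> \<Omega>" for u using lo[OF that] by simp
    show "u \<in> interior \<Omega> \<longleftrightarrow> - \<delta> < s * tangent_gap f u0 u" if "u \<in> \<Omega>" for u using ic[OF that] by simp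
  qed (use s \<delta> \<Omega> in auto)
qed

section \<open>Graphs in space\<close>

lemma mk3_nth [simp]: "mk3 x y z $ 1 = x" "mk3 x y z $ 2 = y" "mk3 x y z $ 3 = z"
  by (simp_all add: mk3_def)

lemma inner_mk3: "b \<bullet> mk3 x y z = b $ 1 * x + b $ 2 * y + b $ 3 * z"
  by (simp add: inner_vec_def sum_3)

lemma norm_mk3: "(norm (mk3 x y z))\<^sup>2 = x\<^sup>2 + y\<^sup>2 + z\<^sup>2"
  unfolding power2_norm_eq_inner inner_mk3 by (simp add: power2_eq_square)

definition graph_proj :: "(real^3 \<Rightarrow> real^3) \<Rightarrow> real^3 \<Rightarrow> real \<times> real" where
  "graph_proj g x = (inv g x $ 1, inv g x $ 2)"

lemma graph_proj_graph_emb: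
  assumes "orthogonal_transformation g"
  shows "graph_proj g (graph_emb g f u) = u"
  using orthogonal_transformation_inj[OF assms] by (simp add: graph_proj_def graph_emb_def)

lemma inj_on_graph_emb: "orthogonal_transformation g \<Longrightarrow> inj_on (graph_emb g f) A"
  by (metis inj_onI graph_proj_graph_emb)

lemma continuous_on_graph_proj:
  assumes "orthogonal_transformation g"
  shows "continuous_on A (graph_proj g)"
proof -
  have "bounded_linear (inv g)"
    using orthogonal_transformation_linear[OF orthogonal_transformation_inv[OF assms]]
    by (simp add: linear_conv_bounded_linear)
  then have "continuous_on A (\<lambda>x. inv g x $ i)" for i
    by (intro linear_continuous_on bounded_linear_compose[OF bounded_linear_vec_nth])
  then show ?thesis unfolding graph_proj_def by (intro continuous_on_Pair)
qed

lemma continuous_on_graph_emb: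
  assumes g: "orthogonal_transformation g" and f: "continuous_on A f"
  shows "continuous_on A (graph_emb g f)"
proof -
  have "continuous_on A (\<lambda>u. mk3 (fst u) (snd u) (f u))"
    unfolding mk3_def
  proof (intro continuous_on_vec_lambda allI)
    fix i :: 3
    show "continuous_on A (\<lambda>u. if i = 1 then fst u else if i = 2 then snd u else f u)"
      by (cases "i = 1"; cases "i = 2") (auto intro!: continuous_intros f)
  qed
  moreover have "continuous_on UNIV g"
    using orthogonal_transformation_linear[OF g]
    by (simp add: linear_continuous_on linear_conv_bounded_linear)
  ultimately show ?thesis
    unfolding graph_emb_def using continuous_on_compose2 by blast
qed

lemma inner_graph_emb:
  "orthogonal_transformation g \<Longrightarrow> g b \<bullet> graph_emb g f u = b \<bullet> mk3 (fst u) (snd u) (f u)"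
  by (simp add: graph_emb_def orthogonal_transformation_def)

lemma norm_graph_emb:
  "orthogonal_transformation g \<Longrightarrow> (norm (graph_emb g f u))\<^sup>2 = (fst u)\<^sup>2 + (snd u)\<^sup>2 + (f u)\<^sup>2"
  by (simp add: graph_emb_def orthogonal_transformation_norm norm_mk3)

lemma gauss_curv_pos_iff: "gauss_curv f u > 0 \<longleftrightarrow> hess_det f u > 0"
proof -
  have "1 + (pd True f u)\<^sup>2 + (pd False f u)\<^sup>2 > 0" by (simp add: add_pos_nonneg)
  then have "(1 + (pd True f u)\<^sup>2 + (pd False f u)\<^sup>2)\<^sup>2 > 0" by simp
  then show ?thesis unfolding gauss_curv_def hess_det_def by (simp add: zero_less_divide_iff)
qed

text \<open>Invariance of domain: the chart coordinates of the disc near an interior point form an open set.\<close>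
lemma graph_chart_ball_in_disc:
  assumes hom: "homeomorphism (cball (0::real \<times> real) 1) D h k" and DS: "D \<subseteq> S"
    and lg: "local_graph S g U f V" and z0: "z0 \<in> ball 0 1" "h z0 \<in> V"
  obtains u0 r where "u0 \<in> U" "graph_emb g f u0 = h z0" "r > 0" "ball u0 r \<subseteq> U"
    "graph_emb g f ` ball u0 r \<subseteq> D"
proof -
  have g: "orthogonal_transformation g" and SV: "S \<inter> V = graph_emb g f ` U" and V: "open V"
    using lg by (auto simp: local_graph_def)
  have hD: "h ` cball 0 1 = D" and ch: "continuous_on (cball 0 1) h"
    and kh: "\<And>z. z \<in> cball 0 1 \<Longrightarrow> k (h z) = z"
    using hom by (auto simp: homeomorphism_def)
  define W where "W = ball 0 1 \<inter> h -` V"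
  have "open W"
    unfolding W_def by (rule continuous_open_preimage[OF continuous_on_subset[OF ch ball_subset_cball] open_ball V])
  define \<Theta> where "\<Theta> = graph_proj g \<circ> h"
  have emb: "graph_emb g f (\<Theta> z) = h z \<and> \<Theta> z \<in> U" if "z \<in> W" for z
  proof -
    have "h z \<in> S \<inter> V" using that hD DS by (auto simp: W_def)
    then show ?thesis using SV by (auto simp: \<Theta>_def graph_proj_graph_emb[OF g])
  qed
  have "W \<subseteq> cball 0 1" by (auto simp: W_def)
  then have "continuous_on W \<Theta>"
    unfolding \<Theta>_def by (rule continuous_on_compose[OF continuous_on_subset[OF ch] continuous_on_graph_proj[OF g]])
  moreover have "inj_on \<Theta> W"
  proof (rule inj_onI)
    fix z z' assume z: "z \<in> W" "z' \<in> W" "\<Theta> z = \<Theta> z'"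
    then have "k (h z) = k (h z')" using emb by metis
    then show "z = z'" using kh z by (auto simp: W_def)
  qed
  ultimately have "open (\<Theta> ` W)" using invariance_of_domain \<open>open W\<close> by blast
  moreover have "z0 \<in> W" using z0 by (simp add: W_def)
  ultimately obtain r where r: "r > 0" "ball (\<Theta> z0) r \<subseteq> \<Theta> ` W"
    using open_contains_ball by blast
  show ?thesis
  proof (rule that[of "\<Theta> z0" r])
    show "\<Theta> z0 \<in> U" "graph_emb g f (\<Theta> z0) = h z0" using emb \<open>z0 \<in> W\<close> by auto
    show "ball (\<Theta> z0) r \<subseteq> U" using r(2) emb by auto
    show "graph_emb g f ` ball (\<Theta> z0) r \<subseteq> D" using r(2) emb hD by (force simp: W_def)
  qed fact
qed

lemma cap_imp_pos_gauss_curv: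
  assumes S: "smooth_surface S" and cap: "is_cap S D"
  obtains g U f V u where "local_graph S g U f V" "u \<in> U" "graph_emb g f u \<in> V" "gauss_curv f u > 0"
proof -
  obtain h k a c where DS: "D \<subseteq> S" and hom: "homeomorphism (cball (0::real \<times> real) 1) D h k"
    and bd: "h ` sphere 0 1 \<subseteq> {x. a \<bullet> x = c}" and above: "D - h ` sphere 0 1 \<subseteq> {x. a \<bullet> x > c}"
    using cap unfolding is_cap_def by blast
  obtain \<epsilon> z0 where \<epsilon>: "\<epsilon> > 0" and z0: "z0 \<in> ball 0 1"
    and max: "\<And>x. x \<in> D \<Longrightarrow> a \<bullet> x + \<epsilon> * (norm x)\<^sup>2 \<le> a \<bullet> h z0 + \<epsilon> * (norm (h z0))\<^sup>2"
    using cap_interior_maximum[OF hom bd above] by blast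
  have "h z0 \<in> S" using hom z0 DS by (auto simp: homeomorphism_def)
  then obtain g U f V where lg: "local_graph S g U f V" and "h z0 \<in> V"
    using S unfolding smooth_surface_def by blast
  then obtain u0 r where u0: "u0 \<in> U" "graph_emb g f u0 = h z0" and r: "r > 0" "ball u0 r \<subseteq> U"
    and sub: "graph_emb g f ` ball u0 r \<subseteq> D"
    using graph_chart_ball_in_disc[OF hom DS lg z0(1)] by blast
  have g: "orthogonal_transformation g" and U: "open U" and f: "smooth2_on U f"
    using lg by (auto simp: local_graph_def)
  define b where "b = inv g a"
  have "a = g b" unfolding b_def using orthogonal_transformation_surj[OF g] by (simp add: surj_f_inv_f)
  then have obj: "a \<bullet> graph_emb g f u + \<epsilon> * (norm (graph_emb g f u))\<^sup>2
      = b $ 1 * fst u + b $ 2 * snd u + b $ 3 * f u + \<epsilon> * ((fst u)\<^sup>2 + (snd u)\<^sup>2 + (f u)\<^sup>2)" for u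
    by (simp add: inner_graph_emb[OF g] norm_graph_emb[OF g] inner_mk3)
  have "hess_det f u0 > 0"
  proof (rule hess_det_pos_at_local_max[OF U f r \<epsilon>])
    fix u assume "u \<in> ball u0 r"
    then have "graph_emb g f u \<in> D" using sub by blast
    from max[OF this] show "b $ 1 * fst u + b $ 2 * snd u + b $ 3 * f u + \<epsilon> * ((fst u)\<^sup>2 + (snd u)\<^sup>2 + (f u)\<^sup>2)
      \<le> b $ 1 * fst u0 + b $ 2 * snd u0 + b $ 3 * f u0 + \<epsilon> * ((fst u0)\<^sup>2 + (snd u0)\<^sup>2 + (f u0)\<^sup>2)"
      by (simp only: obj flip: u0(2))
  qed
  then show ?thesis using that lg u0 \<open>h z0 \<in> V\<close> gauss_curv_pos_iff by auto
qed

lemma graph_region_is_cap: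
  assumes lg: "local_graph S g U f V"
    and \<Omega>: "\<Omega> \<subseteq> U" "compact \<Omega>" "convex \<Omega>" "interior \<Omega> \<noteq> {}" and n: "n \<noteq> 0"
    and above: "\<And>u. u \<in> \<Omega> \<Longrightarrow> c \<le> n \<bullet> mk3 (fst u) (snd u) (f u)"
    and int: "\<And>u. u \<in> \<Omega> \<Longrightarrow> u \<in> interior \<Omega> \<longleftrightarrow> c < n \<bullet> mk3 (fst u) (snd u) (f u)"
  shows "is_cap S (graph_emb g f ` \<Omega>)"
proof -
  have g: "orthogonal_transformation g" and SV: "S \<inter> V = graph_emb g f ` U" and f: "smooth2_on U f"
    using lg by (auto simp: local_graph_def)
  let ?e = "graph_emb g f"
  obtain h0 k0 where hk0: "homeomorphism (cball (0::real \<times> real) 1) \<Omega> h0 k0"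
    and bd: "h0 ` sphere 0 1 = \<Omega> - interior \<Omega>"
    using convex_compact_disc_boundary[OF \<Omega>(3,2,4)] by blast
  have "continuous_on U f" using smooth2_on_imp_C1_on[OF f] by (simp add: C1_on_def)
  then have "continuous_on \<Omega> ?e" by (rule continuous_on_graph_emb[OF g continuous_on_subset[OF _ \<Omega>(1)]])
  then obtain k1 where "homeomorphism \<Omega> (?e ` \<Omega>) ?e k1"
    using homeomorphism_compact[OF \<Omega>(2) _ refl inj_on_graph_emb[OF g]] by blast
  with hk0 have hom: "homeomorphism (cball 0 1) (?e ` \<Omega>) (?e \<circ> h0) (k0 \<circ> k1)"
    by (rule homeomorphism_compose)
  define a where "a = g n"
  have a: "a \<bullet> ?e u = n \<bullet> mk3 (fst u) (snd u) (f u)" for u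
    by (simp add: a_def inner_graph_emb[OF g])
  have "a \<noteq> 0" using n orthogonal_transformation_norm[OF g, of n] by (auto simp: a_def)
  have sphere: "(?e \<circ> h0) ` sphere 0 1 = ?e ` (\<Omega> - interior \<Omega>)" by (metis bd image_comp)
  have "?e ` (\<Omega> - (\<Omega> - interior \<Omega>)) = ?e ` \<Omega> - ?e ` (\<Omega> - interior \<Omega>)"
    by (rule inj_on_image_set_diff[OF inj_on_graph_emb[OF g]]) auto
  moreover have "\<Omega> - (\<Omega> - interior \<Omega>) = interior \<Omega>" using interior_subset by blast
  ultimately have inside: "?e ` \<Omega> - (?e \<circ> h0) ` sphere 0 1 = ?e ` interior \<Omega>"
    by (simp only: sphere)
  have "(?e \<circ> h0) ` sphere 0 1 \<subseteq> {x. a \<bullet> x = c}"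
    unfolding sphere
  proof (rule image_subsetI)
    fix u assume "u \<in> \<Omega> - interior \<Omega>"
    then show "?e u \<in> {x. a \<bullet> x = c}" using above[of u] int[of u] by (simp add: a)
  qed
  moreover have "?e ` \<Omega> - (?e \<circ> h0) ` sphere 0 1 \<subseteq> {x. a \<bullet> x > c}"
    unfolding inside
  proof (rule image_subsetI)
    fix u assume "u \<in> interior \<Omega>"
    then show "?e u \<in> {x. a \<bullet> x > c}" using int[of u] interior_subset[of \<Omega>] by (auto simp: a)
  qed
  moreover have "?e ` \<Omega> \<subseteq> S" using \<Omega>(1) SV by auto
  ultimately show ?thesis
    unfolding is_cap_def using hom \<open>a \<noteq> 0\<close> by (intro conjI exI[of _ "?e \<circ> h0"] exI[of _ "k0 \<circ> k1"] exI[of _ a] exI[of _ c])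
qed

lemma pos_gauss_curv_imp_cap:
  assumes lg: "local_graph S g U f V" and u0: "u0 \<in> U" and K: "gauss_curv f u0 > 0"
  shows "\<exists>D. is_cap S D"
proof -
  have U: "open U" and f: "smooth2_on U f" using lg by (auto simp: local_graph_def)
  obtain s \<delta> \<Omega> where s: "s = 1 \<or> s = -1" and \<Omega>: "\<Omega> \<subseteq> U" "compact \<Omega>" "convex \<Omega>" "interior \<Omega> \<noteq> {}"
    and above: "\<And>u. u \<in> \<Omega> \<Longrightarrow> - \<delta> \<le> s * tangent_gap f u0 u"
    and int: "\<And>u. u \<in> \<Omega> \<Longrightarrow> u \<in> interior \<Omega> \<longleftrightarrow> - \<delta> < s * tangent_gap f u0 u"
    using tangent_gap_superlevel_disc[OF U f u0] K by (metis gauss_curv_pos_iff)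
  txt \<open>The plane \<open>n \<bullet> x = c\<close> is the tangent plane at \<open>u0\<close>, shifted by \<open>\<delta>\<close>.\<close>
  define n where "n = mk3 (- s * pd True f u0) (- s * pd False f u0) s"
  define c where "c = s * (f u0 - pd True f u0 * fst u0 - pd False f u0 * snd u0) - \<delta>"
  have n_gap: "n \<bullet> mk3 (fst u) (snd u) (f u) = c + (s * tangent_gap f u0 u + \<delta>)" for u
    by (simp add: n_def c_def inner_mk3 tangent_gap_def dir_deriv_def algebra_simps)
  have "n $ 3 \<noteq> 0" using s by (auto simp: n_def)
  then have "n \<noteq> 0" by auto
  have "is_cap S (graph_emb g f ` \<Omega>)"
  proof (rule graph_region_is_cap[OF lg \<Omega> \<open>n \<noteq> 0\<close>])
    fix u assume "u \<in> \<Omega>"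
    show "c \<le> n \<bullet> mk3 (fst u) (snd u) (f u)" using above[OF \<open>u \<in> \<Omega>\<close>] by (simp add: n_gap)
    show "u \<in> interior \<Omega> \<longleftrightarrow> c < n \<bullet> mk3 (fst u) (snd u) (f u)"
      using int[OF \<open>u \<in> \<Omega>\<close>] by (auto simp: n_gap)
  qed
  then show ?thesis by blast
qed

theorem mainTheorem15:
  fixes S :: "(real^3) set"
  assumes "smooth_surface S"
  shows "saddle S \<longleftrightarrow> \<not> (\<exists>D. is_cap S D)"
proof
  assume "saddle S"
  show "\<not> (\<exists>D. is_cap S D)"
  proof
    assume "\<exists>D. is_cap S D"
    then obtain D where "is_cap S D" ..
    then obtain g U f V u where chart: "local_graph S g U f V" "u \<in> U" "graph_emb g f u \<in> V"
      and "gauss_curv f u > 0"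
      using cap_imp_pos_gauss_curv[OF assms] by blast
    moreover have "gauss_curv f u \<le> 0" using \<open>saddle S\<close> chart unfolding saddle_def by blast
    ultimately show False by simp
  qed
next
  assume no_cap: "\<not> (\<exists>D. is_cap S D)"
  show "saddle S" unfolding saddle_def
  proof (intro allI impI)
    fix g U f V u assume chart: "local_graph S g U f V \<and> u \<in> U \<and> graph_emb g f u \<in> V"
    show "gauss_curv f u \<le> 0"
    proof (rule ccontr)
      assume "\<not> gauss_curv f u \<le> 0"
      then have "\<exists>D. is_cap S D" using chart by (intro pos_gauss_curv_imp_cap[of S g U f V u]) auto
      with no_cap show False ..
    qed
  qed
qed

end
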